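(* Let $(X,d)$ be a metric space, $Y$ a complete subspace of $X$, and $T,g:X\to X$. Assume: (a) $T(X)\subseteq Y\cap g(X)$; (b) there exists $G\in\mathcal{G}$ which also satisfies (G3) such that for all $x,y\in X$, $$G\big(d(Tx,Ty),\,d(gx,gy),\,d(gx,Tx),\,d(gy,Ty),\,d(gx,Ty),\,d(gy,Tx)\big)\le0;$$ either (e) $Y\subseteq g(X)$, or alternatively (e$'$) $T$ and $g$ are compatible and both continuous; and $T$ and $g$ commute at their coincidence points. Then $T$ and $g$ have a unique common fixed point.
   Context: $\mathbb{R}_+=[0,\infty)$. $\Phi$: functions $\phi:\mathbb{R}_+\to\mathbb{R}_+$, increasing, $\phi(0)=0$, $\sum_{n\ge1}\phi^n(t)<\infty$ for every $t>0$. $\mathcal{G}$: lower semi-continuous $G:\mathbb{R}_+^6\to\mathbb{R}$ such that (G1) $G$ is decreasing in its fifth and sixth variables, and there is $\phi\in\Phi$ such that for all $r,s\ge0$, $G(r,s,s,r,r+s,0)\le0$ implies $r\le\phi(s)$; (G2) $G(r,0,r,0,0,r)>0$ for all $r>0$. (G3): $G(r,r,0,0,r,r)>0$ for all $r>0$. $T,g$ compatible: $\lim_n d(T(gx_n),g(Tx_n))=0$ whenever $\lim_n gx_n=\lim_n Tx_n$. $T$ and $g$ commute at coincidence points: $T(gx)=g(Tx)$ whenever $Tx=gx$. *)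

theory Defs
  imports "HOL-Analysis.Analysis"
begin

type_synonym real6 = "real \<times> real \<times> real \<times> real \<times> real \<times> real"

definition nonneg6 :: "real6 set" where
  "nonneg6 = {(a,b,c,d,e,f). 0 \<le> a \<and> 0 \<le> b \<and> 0 \<le> c \<and> 0 \<le> d \<and> 0 \<le> e \<and> 0 \<le> f}"

definition lsc_on :: "'a::metric_space set \<Rightarrow> ('a \<Rightarrow> real) \<Rightarrow> bool" where
  "lsc_on S f \<longleftrightarrow> (\<forall>x\<in>S. \<forall>e>0. \<exists>d>0. \<forall>y\<in>S. dist y x < d \<longrightarrow> f x - e < f y)"

definition PhiClass :: "(real \<Rightarrow> real) set" where
  "PhiClass = {\<phi>. (\<forall>t\<ge>0. \<phi> t \<ge> 0) \<and> mono_on {0..} \<phi> \<and> \<phi> 0 = 0 \<and>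
                   (\<forall>t>0. summable (\<lambda>n. (\<phi> ^^ Suc n) t))}"

text \<open>The class G (conditions G1 and G2 and lower semicontinuity on R_+^6).\<close>
definition GClass :: "(real6 \<Rightarrow> real) set" where
  "GClass = {G. lsc_on nonneg6 G
      \<and> (\<forall>a b c d e e' f. 0 \<le> a \<longrightarrow> 0 \<le> b \<longrightarrow> 0 \<le> c \<longrightarrow> 0 \<le> d \<longrightarrow> 0 \<le> e \<longrightarrow> e \<le> e' \<longrightarrow> 0 \<le> f
            \<longrightarrow> G (a,b,c,d,e',f) \<le> G (a,b,c,d,e,f))
      \<and> (\<forall>a b c d e f f'. 0 \<le> a \<longrightarrow> 0 \<le> b \<longrightarrow> 0 \<le> c \<longrightarrow> 0 \<le> d \<longrightarrow> 0 \<le> e \<longrightarrow> 0 \<le> f \<longrightarrow> f \<le> f'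
            \<longrightarrow> G (a,b,c,d,e,f') \<le> G (a,b,c,d,e,f))
      \<and> (\<exists>\<phi>\<in>PhiClass. \<forall>r s. 0 \<le> r \<longrightarrow> 0 \<le> s \<longrightarrow> G (r,s,s,r,r+s,0) \<le> 0 \<longrightarrow> r \<le> \<phi> s)
      \<and> (\<forall>r>0. G (r,0,r,0,0,r) > 0)}"

definition G3 :: "(real6 \<Rightarrow> real) \<Rightarrow> bool" where
  "G3 G \<longleftrightarrow> (\<forall>r>0. G (r,r,0,0,r,r) > 0)"

definition compatible :: "('a::metric_space \<Rightarrow> 'a) \<Rightarrow> ('a \<Rightarrow> 'a) \<Rightarrow> bool" where
  "compatible T g \<longleftrightarrow> (\<forall>x :: nat \<Rightarrow> 'a. \<forall>z.
      (\<lambda>n. g (x n)) \<longlonglongrightarrow> z \<longrightarrow> (\<lambda>n. T (x n)) \<longlonglongrightarrow> z \<longrightarrow>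
      (\<lambda>n. dist (T (g (x n))) (g (T (x n)))) \<longlonglongrightarrow> 0)"

definition commute_at_coincidence :: "('a \<Rightarrow> 'a) \<Rightarrow> ('a \<Rightarrow> 'a) \<Rightarrow> bool" where
  "commute_at_coincidence T g \<longleftrightarrow> (\<forall>x. T x = g x \<longrightarrow> T (g x) = g (T x))"

end

theory Submission
  imports Defs
begin

text \<open>
  Since \<open>T(X) \<subseteq> g(X)\<close> there is a Jungck orbit \<open>g x(n+1) = T x(n)\<close>. Condition (b) at
  consecutive orbit points, the monotonicity of \<open>G\<close> in its fifth variable and the triangle
  inequality give, by (G1), \<open>d(n+1) \<le> \<phi>(d(n))\<close> for the consecutive distances
  \<open>d(n) = dist (T x(n)) (T x(n+1))\<close>; these are dominated by the summable iterates of \<open>\<phi>\<close>, so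
  \<open>T x(n)\<close> is Cauchy in the complete set \<open>Y\<close>, with limit \<open>u\<close>. Passing to the limit in (b)
  by lower semicontinuity shows that \<open>T w = u\<close> at every coincidence point \<open>w\<close> of \<open>T\<close> and \<open>g\<close>
  (by (G3)), and that a coincidence point exists: under (e) a \<open>g\<close>-preimage of \<open>u\<close> (by (G2)),
  under (e') \<open>u\<close> itself. Commutativity at coincidence points then makes \<open>u\<close> a coincidence
  point, so \<open>T u = u = g u\<close>; uniqueness is (G3) again.
\<close>

lemma lsc_on_limit_nonpos:
  assumes "lsc_on S G" "\<And>n. f n \<in> S" "p \<in> S" "f \<longlonglongrightarrow> p" "\<And>n. G (f n) \<le> 0"
  shows "G p \<le> 0"
proof (rule ccontr)
  assume "\<not> G p \<le> 0"
  hence pos: "G p / 2 > 0" by simp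
  obtain d where d: "d > 0" "\<forall>y\<in>S. dist y p < d \<longrightarrow> G p - G p / 2 < G y"
    using assms(1,3) pos unfolding lsc_on_def by blast
  obtain N where "\<forall>n\<ge>N. dist (f n) p < d"
    using assms(4) d(1) unfolding lim_sequentially by blast
  hence "G p - G p / 2 < G (f N)" using d assms(2) by auto
  with assms(5)[of N] pos show False by linarith
qed

lemma Cauchy_of_summable_dist_Suc:
  fixes y :: "nat \<Rightarrow> 'a::metric_space"
  assumes summable: "summable (\<lambda>n. dist (y n) (y (Suc n)))"
  shows "Cauchy y"
proof (rule metric_CauchyI)
  define d where "d n = dist (y n) (y (Suc n))" for n
  have chain: "dist (y m) (y n) \<le> sum d {m..<n}" if "m \<le> n" for m n
    using that
  proof (induction n rule: dec_induct)
    case (step n)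
    have "dist (y m) (y (Suc n)) \<le> dist (y m) (y n) + d n"
      unfolding d_def by (rule dist_triangle)
    with step.IH step.hyps show ?case by simp
  qed simp
  fix \<epsilon> :: real assume "\<epsilon> > 0"
  then obtain N where N: "\<forall>m\<ge>N. \<forall>n. norm (sum d {m..<n}) < \<epsilon>"
    using summable unfolding d_def[symmetric] summable_Cauchy by blast
  have "dist (y m) (y n) < \<epsilon>" if "m \<ge> N" "m \<le> n" for m n
  proof -
    have "dist (y m) (y n) \<le> sum d {m..<n}" using chain[OF that(2)] .
    also have "\<dots> < \<epsilon>" using N that(1) by (simp add: abs_less_iff)
    finally show ?thesis .
  qed
  hence "dist (y m) (y n) < \<epsilon>" if "m \<ge> N" "n \<ge> N" for m n
    using that by (metis dist_commute nle_le)
  thus "\<exists>M. \<forall>m\<ge>M. \<forall>n\<ge>M. dist (y m) (y n) < \<epsilon>" by blast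
qed

lemma PhiClass_funpow_nonneg:
  assumes "\<phi> \<in> PhiClass" "t \<ge> 0"
  shows "(\<phi> ^^ n) t \<ge> 0"
  using assms by (induction n) (auto simp: PhiClass_def)

lemma PhiClass_summable_funpow:
  assumes \<phi>: "\<phi> \<in> PhiClass" and "t \<ge> 0"
  shows "summable (\<lambda>n. (\<phi> ^^ n) t)"
proof (cases "t = 0")
  case True
  have "(\<phi> ^^ n) 0 = 0" for n
    using \<phi> by (induction n) (auto simp: PhiClass_def)
  with True show ?thesis by simp
next
  case False
  with \<open>t \<ge> 0\<close> \<phi> show ?thesis
    by (subst summable_Suc_iff[symmetric]) (auto simp: PhiClass_def)
qed

lemma PhiClass_summable_of_le:
  assumes \<phi>: "\<phi> \<in> PhiClass" and nonneg: "\<And>n. d n \<ge> 0"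
    and step: "\<And>n. d (Suc n) \<le> \<phi> (d n)"
  shows "summable d"
proof -
  have mono: "mono_on {0..} \<phi>" using \<phi> by (simp add: PhiClass_def)
  have le_funpow: "d n \<le> (\<phi> ^^ n) (d 0)" for n
  proof (induction n)
    case (Suc n)
    have "\<phi> (d n) \<le> \<phi> ((\<phi> ^^ n) (d 0))"
      using mono_onD[OF mono] Suc nonneg PhiClass_funpow_nonneg[OF \<phi> nonneg] by simp
    with step[of n] show ?case by simp
  qed simp
  show ?thesis
    by (rule summable_comparison_test[OF _ PhiClass_summable_funpow[OF \<phi> nonneg]])
       (use le_funpow nonneg in auto)
qed

lemma GClass_lsc: "G \<in> GClass \<Longrightarrow> lsc_on nonneg6 G"
  unfolding GClass_def by (elim CollectE conjE)

lemma GClass_antimono5: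
  assumes "G \<in> GClass" "0 \<le> a" "0 \<le> b" "0 \<le> c" "0 \<le> d" "0 \<le> e" "e \<le> e'" "0 \<le> f"
  shows "G (a,b,c,d,e',f) \<le> G (a,b,c,d,e,f)"
  using assms(1) unfolding GClass_def by (elim CollectE conjE) (use assms in blast)

lemma GClass_G1:
  assumes "G \<in> GClass"
  obtains \<phi> where "\<phi> \<in> PhiClass"
    and "\<And>r s. 0 \<le> r \<Longrightarrow> 0 \<le> s \<Longrightarrow> G (r,s,s,r,r+s,0) \<le> 0 \<Longrightarrow> r \<le> \<phi> s"
proof -
  have "\<exists>\<phi>\<in>PhiClass. \<forall>r s. 0 \<le> r \<longrightarrow> 0 \<le> s \<longrightarrow> G (r,s,s,r,r+s,0) \<le> 0 \<longrightarrow> r \<le> \<phi> s"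
    using assms unfolding GClass_def by (elim CollectE conjE)
  with that show thesis by blast
qed

lemma GClass_G2:
  assumes "G \<in> GClass" "r > 0"
  shows "G (r,0,r,0,0,r) > 0"
proof -
  have "\<forall>r>0. G (r,0,r,0,0,r) > 0"
    using assms(1) unfolding GClass_def by (elim CollectE conjE)
  with assms(2) show ?thesis by blast
qed

lemma Jungck_orbit_exists:
  assumes "range T \<subseteq> range g"
  obtains x :: "nat \<Rightarrow> 'a" where "\<And>n. g (x (Suc n)) = T (x n)"
proof -
  define f where "f z = inv g (T z)" for z
  have f: "g (f z) = T z" for z
    unfolding f_def using assms by (intro f_inv_into_f) blast
  show ?thesis
    by (rule that[of "\<lambda>n. (f ^^ n) undefined"]) (simp add: f)
qed

locale G_contractive_pair =
  fixes T g :: "'a::metric_space \<Rightarrow> 'a" and G :: "real6 \<Rightarrow> real"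
  assumes G_class: "G \<in> GClass"
    and contractive: "\<And>x y. G (dist (T x) (T y), dist (g x) (g y), dist (g x) (T x),
                           dist (g y) (T y), dist (g x) (T y), dist (g y) (T x)) \<le> 0"
begin

lemma common_fixed_point_unique:
  assumes "G3 G" "T z = z" "g z = z" "T w = w" "g w = w"
  shows "z = w"
proof (rule ccontr)
  assume "z \<noteq> w"
  hence "G (dist z w, dist z w, 0, 0, dist z w, dist z w) > 0"
    using \<open>G3 G\<close> by (simp add: G3_def)
  moreover have "G (dist z w, dist z w, 0, 0, dist z w, dist z w) \<le> 0"
    using contractive[of z w] assms(2-5) by (simp add: dist_commute)
  ultimately show False by linarith
qed

context
  fixes x :: "nat \<Rightarrow> 'a"
  assumes orbit: "\<And>n. g (x (Suc n)) = T (x n)"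
begin

lemma orbit_Cauchy: "Cauchy (\<lambda>n. T (x n))"
proof -
  obtain \<phi> where \<phi>: "\<phi> \<in> PhiClass"
    and G1: "\<And>r s. 0 \<le> r \<Longrightarrow> 0 \<le> s \<Longrightarrow> G (r,s,s,r,r+s,0) \<le> 0 \<Longrightarrow> r \<le> \<phi> s"
    using GClass_G1[OF G_class] by blast
  define y where "y n = T (x n)" for n
  define d where "d n = dist (y n) (y (Suc n))" for n
  have step: "d (Suc n) \<le> \<phi> (d n)" for n
  proof -
    have "G (d (Suc n), d n, d n, d (Suc n), dist (y n) (y (Suc (Suc n))), 0) \<le> 0"
      using contractive[of "x (Suc n)" "x (Suc (Suc n))"] by (simp add: orbit y_def d_def)
    moreover have "dist (y n) (y (Suc (Suc n))) \<le> d (Suc n) + d n"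
      unfolding d_def using dist_triangle[of "y n" "y (Suc (Suc n))" "y (Suc n)"] by simp
    ultimately have "G (d (Suc n), d n, d n, d (Suc n), d (Suc n) + d n, 0) \<le> 0"
      using GClass_antimono5[OF G_class, of "d (Suc n)" "d n" "d n" "d (Suc n)"
          "dist (y n) (y (Suc (Suc n)))" "d (Suc n) + d n" 0]
      by (simp add: d_def)
    thus ?thesis using G1 d_def by simp
  qed
  have "summable d"
    by (intro PhiClass_summable_of_le[OF \<phi>] step) (simp add: d_def)
  thus ?thesis
    unfolding d_def y_def by (rule Cauchy_of_summable_dist_Suc)
qed

context
  fixes u :: 'a
  assumes lim: "(\<lambda>n. T (x n)) \<longlonglongrightarrow> u"
begin

lemma contractive_limit:
  "G (dist (T p) u, dist (g p) u, dist (g p) (T p), 0, dist (g p) u, dist u (T p)) \<le> 0"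
proof -
  define y where "y n = T (x n)" for n
  have yu: "y \<longlonglongrightarrow> u" and yu1: "(\<lambda>n. y (Suc n)) \<longlonglongrightarrow> u"
    using lim LIMSEQ_Suc unfolding y_def by blast+
  define f where "f n = (dist (T p) (y (Suc n)), dist (g p) (y n), dist (g p) (T p),
                   dist (y n) (y (Suc n)), dist (g p) (y (Suc n)), dist (y n) (T p))" for n
  have "(\<lambda>n. dist (y n) (y (Suc n))) \<longlonglongrightarrow> dist u u"
    by (intro tendsto_intros yu yu1)
  hence f_lim: "f \<longlonglongrightarrow> (dist (T p) u, dist (g p) u, dist (g p) (T p), 0, dist (g p) u, dist u (T p))"
    unfolding f_def by (intro tendsto_Pair tendsto_intros yu yu1) simp_all
  have f_nonpos: "G (f n) \<le> 0" for n
    using contractive[of p "x (Suc n)"] by (simp add: f_def orbit y_def)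
  have f_nonneg: "f n \<in> nonneg6" for n
    by (simp add: f_def nonneg6_def)
  show ?thesis
    by (rule lsc_on_limit_nonpos[OF GClass_lsc[OF G_class] f_nonneg _ f_lim f_nonpos])
       (simp add: nonneg6_def)
qed

lemma coincidence_value_eq_limit:
  assumes "G3 G" "T w = g w"
  shows "T w = u"
proof (rule ccontr)
  assume "T w \<noteq> u"
  hence "G (dist (T w) u, dist (T w) u, 0, 0, dist (T w) u, dist (T w) u) > 0"
    using \<open>G3 G\<close> by (simp add: G3_def)
  moreover have "G (dist (T w) u, dist (T w) u, 0, 0, dist (T w) u, dist (T w) u) \<le> 0"
    using contractive_limit[of w] assms(2) by (simp add: dist_commute)
  ultimately show False by linarith
qed

lemma coincidence_at_preimage_of_limit:
  assumes "g v = u"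
  shows "T v = u"
proof (rule ccontr)
  assume "T v \<noteq> u"
  hence "G (dist (T v) u, 0, dist (T v) u, 0, 0, dist (T v) u) > 0"
    using GClass_G2[OF G_class] by simp
  moreover have "G (dist (T v) u, 0, dist (T v) u, 0, 0, dist (T v) u) \<le> 0"
    using contractive_limit[of v] assms by (simp add: dist_commute)
  ultimately show False by linarith
qed

lemma coincidence_at_limit_of_compatible:
  assumes "compatible T g" "continuous_on UNIV T" "continuous_on UNIV g"
  shows "T u = g u"
proof -
  have gx: "(\<lambda>n. g (x (Suc n))) \<longlonglongrightarrow> u" and Tx: "(\<lambda>n. T (x (Suc n))) \<longlonglongrightarrow> u"
    using lim LIMSEQ_Suc by (auto simp: orbit)
  have Tgx: "(\<lambda>n. T (g (x (Suc n)))) \<longlonglongrightarrow> T u"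
    by (rule continuous_on_tendsto_compose[OF assms(2) gx]) simp_all
  have gTx: "(\<lambda>n. g (T (x (Suc n)))) \<longlonglongrightarrow> g u"
    by (rule continuous_on_tendsto_compose[OF assms(3) Tx]) simp_all
  have "(\<lambda>n. dist (T (g (x (Suc n)))) (g (T (x (Suc n))))) \<longlonglongrightarrow> dist (T u) (g u)"
    using Tgx gTx by (rule tendsto_dist)
  moreover have "(\<lambda>n. dist (T (g (x (Suc n)))) (g (T (x (Suc n))))) \<longlonglongrightarrow> 0"
    using assms(1)[unfolded compatible_def, rule_format, of "\<lambda>n. x (Suc n)", OF gx Tx] .
  ultimately have "dist (T u) (g u) = 0"
    by (rule LIMSEQ_unique)
  thus ?thesis by simp
qed

end

end

end

theorem corollary5:
  fixes T g :: "'a::metric_space \<Rightarrow> 'a" and Y :: "'a set" and G :: "real6 \<Rightarrow> real"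
  assumes Ycomplete: "complete Y"
    and a: "range T \<subseteq> Y \<inter> range g"
    and Gclass: "G \<in> GClass" and G3: "G3 G"
    and b: "\<forall>x y. G (dist (T x) (T y), dist (g x) (g y), dist (g x) (T x), dist (g y) (T y),
                      dist (g x) (T y), dist (g y) (T x)) \<le> 0"
    and e: "Y \<subseteq> range g \<or> (compatible T g \<and> continuous_on UNIV T \<and> continuous_on UNIV g)"
    and comm: "commute_at_coincidence T g"
  shows "\<exists>!z. T z = z \<and> g z = z"
proof -
  interpret G_contractive_pair T g G
    by unfold_locales (fact Gclass, rule b[rule_format])
  have "range T \<subseteq> range g" using a by blast
  then obtain x where orbit: "\<And>n. g (x (Suc n)) = T (x n)"
    by (rule Jungck_orbit_exists) blast
  have "\<forall>n. T (x n) \<in> Y" using a by blast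
  with Ycomplete obtain u where "u \<in> Y" and lim: "(\<lambda>n. T (x n)) \<longlonglongrightarrow> u"
    using orbit_Cauchy[of x, OF orbit] by (rule completeE)
  obtain w where coincidence: "T w = g w"
  proof (cases "Y \<subseteq> range g")
    case True
    with \<open>u \<in> Y\<close> obtain v where "g v = u" by blast
    with coincidence_at_preimage_of_limit[of x u, OF orbit lim] show ?thesis
      using that[of v] by simp
  next
    case False
    with e have "T u = g u"
      using coincidence_at_limit_of_compatible[of x u, OF orbit lim] by blast
    then show ?thesis by (rule that)
  qed
  have Tw: "T w = u" and gw: "g w = u"
    using coincidence_value_eq_limit[of x u, OF orbit lim G3 coincidence] coincidence by simp_all
  have "T (g w) = g (T w)"
    using comm coincidence unfolding commute_at_coincidence_def by blast
  then have "T u = g u" by (simp only: Tw gw)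
  moreover from this have "T u = u"
    by (rule coincidence_value_eq_limit[of x u, OF orbit lim G3])
  ultimately show ?thesis
    using common_fixed_point_unique[OF G3] by (intro ex1I[of _ u]) simp_all
qed

end
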